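(* Let $\mathbb{F}$ be a field, $d\geq3$ and $V$ a vector space over $\mathbb{F}$ of dimension $d+1$. Let $E^*_0,\dots,E^*_d$ be a system of mutually orthogonal idempotents in $\mathrm{End}(V)$ and $A\in\mathrm{End}(V)$ with $E^*_iAE^*_j=0$ if $|i-j|>1$ and $E^*_iAE^*_j\neq0$ if $|i-j|=1$. Assume $A$ is multiplicity-free and bipartite with primitive idempotents $E_0,\dots,E_d$ and eigenvalues $\theta_0,\dots,\theta_d$. Let $\theta^*_0,\dots,\theta^*_d\in\mathbb{F}$ be mutually distinct and $A^*=\sum_i\theta^*_iE^*_i$. Assume $E_0$ is normalizing, $(E_0,E_1)$ is a tail, and $E_2$ is the vertex of $\Delta$ other than $E_0$ adjacent to $E_1$. Then for $1\le i\le d-1$, $$\theta_0(\theta^*_{i+1}-\theta^*_1)(\theta^*_{i-1}-\theta^*_1)+\theta_1(\theta^*_i-\theta^*_0)(\theta^*_{d-1}-\theta^*_{i+1}-\theta^*_{i-1}+\theta^*_1)-\theta_2(\theta^*_i-\theta^*_0)(\theta^*_d-\theta^*_i)=0.$$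
   Context: A system of mutually orthogonal idempotents: $E^*_iE^*_j=\delta_{ij}E^*_i$, $\operatorname{rank}E^*_i=1$. $A$ multiplicity-free: $d+1$ distinct eigenvalues in $\mathbb{F}$; $E_i$ is the projection onto the $\theta_i$-eigenspace along the other eigenspaces. Bipartite: $\operatorname{tr}(E^*_iA)=0$ for all $i$. $\Delta$: graph on $E_0,\dots,E_d$ with $E_i\neq E_j$ adjacent iff $E_iA^*E_j\neq0$. $(E_0,E_1)$ is a tail if $E_0$ is adjacent to no vertex other than $E_1$ and $E_1$ is adjacent to at most one vertex other than $E_0$. The matrix $Y$ representing $A$ w.r.t. a basis $v_0,\dots,v_d$ satisfies $Av_j=\sum_iY_{ij}v_i$. An eigenvalue $\theta$ of $A$ is normalizing if some basis with $v_i\in E^*_iV$ makes every row sum of the matrix representing $A$ equal to $\theta$; $E_i$ is normalizing if $\theta_i$ is. *)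

theory Defs
  imports "Jordan_Normal_Form.Matrix" "Jordan_Normal_Form.Char_Poly" "Jordan_Normal_Form.DL_Rank"
begin

text \<open>Throughout, V = F^(d+1) and End(V) = (d+1) x (d+1) matrices over the field F.
  Indices range over 0..d.\<close>

definition mat_trace :: "'a::comm_ring_1 mat \<Rightarrow> 'a" where
  "mat_trace M = (\<Sum>i<dim_row M. M $$ (i,i))"

definition orth_idem_system :: "nat \<Rightarrow> (nat \<Rightarrow> 'a::field mat) \<Rightarrow> bool" where
  "orth_idem_system d Es \<longleftrightarrow>
     (\<forall>i\<le>d. Es i \<in> carrier_mat (d+1) (d+1) \<and> vec_space.rank (d+1) (Es i) = 1) \<and>
     (\<forall>i\<le>d. \<forall>j\<le>d. Es i * Es j = (if i = j then Es i else 0\<^sub>m (d+1) (d+1)))"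

text \<open>A is multiplicity-free with eigenvalues th 0..th d (mutually distinct, all in F),
  and E i is the projection onto the th i-eigenspace along the other eigenspaces
  (the primitive idempotents): the E i are mutually orthogonal idempotents summing to
  the identity with A E i = th i E i.\<close>
definition primitive_idempotents ::
  "nat \<Rightarrow> 'a::field mat \<Rightarrow> (nat \<Rightarrow> 'a) \<Rightarrow> (nat \<Rightarrow> 'a mat) \<Rightarrow> bool" where
  "primitive_idempotents d A th E \<longleftrightarrow>
     A \<in> carrier_mat (d+1) (d+1) \<and>
     (\<forall>i\<le>d. \<forall>j\<le>d. i \<noteq> j \<longrightarrow> th i \<noteq> th j) \<and>
     (\<forall>i\<le>d. eigenvalue A (th i)) \<and>
     (\<forall>i\<le>d. E i \<in> carrier_mat (d+1) (d+1) \<and> A * E i = th i \<cdot>\<^sub>m E i) \<and>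
     (\<forall>i\<le>d. \<forall>j\<le>d. E i * E j = (if i = j then E i else 0\<^sub>m (d+1) (d+1))) \<and>
     (\<forall>k<d+1. \<forall>l<d+1. (\<Sum>i\<le>d. E i $$ (k,l)) = (if k = l then 1 else 0))"

definition delta_adj :: "(nat \<Rightarrow> 'a::field mat) \<Rightarrow> 'a mat \<Rightarrow> nat \<Rightarrow> nat \<Rightarrow> bool" where
  "delta_adj E As i j \<longleftrightarrow> E i \<noteq> E j \<and> E i * As * E j \<noteq> 0\<^sub>m (dim_row As) (dim_col As)"

definition is_tail :: "nat \<Rightarrow> (nat \<Rightarrow> 'a::field mat) \<Rightarrow> 'a mat \<Rightarrow> bool" where
  "is_tail d E As \<longleftrightarrow>
     (\<forall>j\<le>d. E j \<noteq> E 1 \<longrightarrow> \<not> delta_adj E As 0 j) \<and>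
     (\<forall>j\<le>d. \<forall>k\<le>d. E j \<noteq> E 0 \<and> E k \<noteq> E 0 \<and> delta_adj E As 1 j \<and> delta_adj E As 1 k
        \<longrightarrow> E j = E k)"

definition normalizing :: "nat \<Rightarrow> (nat \<Rightarrow> 'a::field mat) \<Rightarrow> 'a mat \<Rightarrow> 'a \<Rightarrow> bool" where
  "normalizing d Es A \<theta> \<longleftrightarrow>
     (\<exists>v :: nat \<Rightarrow> 'a vec. \<exists>Y :: 'a mat.
        (\<forall>i\<le>d. v i \<in> carrier_vec (d+1) \<and> (\<exists>w \<in> carrier_vec (d+1). v i = Es i *\<^sub>v w)) \<and>
        det (mat_of_cols (d+1) (map v [0..<d+1])) \<noteq> 0 \<and>
        Y \<in> carrier_mat (d+1) (d+1) \<and>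
        (\<forall>j\<le>d. \<forall>k<d+1. (A *\<^sub>v v j) $ k = (\<Sum>i\<le>d. Y $$ (i,j) * v i $ k)) \<and>
        (\<forall>i\<le>d. (\<Sum>j\<le>d. Y $$ (i,j)) = \<theta>))"

end

theory Submission
  imports Defs
begin

text \<open>
  Write \<open>A\<close> in a basis \<open>v\<^sub>0, \<dots>, v\<^sub>d\<close> with \<open>v\<^sub>i \<in> E*\<^sub>iV\<close> witnessing that \<open>E\<^sub>0\<close> is
  normalizing. The resulting matrix \<open>Y\<close> is tridiagonal with zero diagonal (bipartiteness),
  nonzero off-diagonal entries and all row sums \<open>\<theta>\<^sub>0\<close>, so the all-ones vector spans
  \<open>E\<^sub>0V\<close>, while \<open>A*\<close> becomes the diagonal matrix \<open>T = diag(\<theta>*)\<close>. Eigenvectors of an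
  irreducible tridiagonal matrix are determined by their first coordinate, and such a matrix
  is similar to its transpose via a diagonal matrix; the latter makes adjacency in \<open>\<Delta>\<close>
  symmetric. The tail condition therefore gives \<open>E\<^sub>jTE\<^sub>0 = 0\<close> for \<open>j \<ge> 2\<close> and
  \<open>E\<^sub>jTE\<^sub>1 = 0\<close> for \<open>j \<ge> 3\<close>. Hence \<open>T\<one> = \<beta>\<one> + w\<close> with \<open>w \<in> E\<^sub>1V\<close>, i.e.
  \<open>w\<^sub>i = \<theta>*\<^sub>i - \<beta>\<close>, and \<open>Tw \<in> E\<^sub>0V + E\<^sub>1V + E\<^sub>2V\<close>, so that
  \<open>(Y - \<theta>\<^sub>2)Tw = X\<one> + Zw\<close> for scalars \<open>X, Z\<close>. Reading the eigenvector equation of \<open>w\<close> and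
  this relation at rows \<open>0\<close>, \<open>i\<close> and \<open>d\<close> gives scalar equations; rows \<open>0\<close> and \<open>d\<close> determine
  \<open>Z\<close>, and row \<open>i\<close> then yields the identity.
\<close>

lemma index_mult_mat_sum:
  assumes "A \<in> carrier_mat n m" "B \<in> carrier_mat m l" "i < n" "j < l"
  shows "(A * B) $$ (i,j) = (\<Sum>c<m. A $$ (i,c) * B $$ (c,j))"
  using assms by (simp add: scalar_prod_def atLeast0LessThan)

lemma index_mult_mat_vec_sum:
  assumes "A \<in> carrier_mat n m" "z \<in> carrier_vec m" "i < n"
  shows "(A *\<^sub>v z) $ i = (\<Sum>c<m. A $$ (i,c) * z $ c)"
  using assms by (simp add: scalar_prod_def atLeast0LessThan)

lemma smult_mult_mat_vec:
  fixes A :: "'a::comm_ring_1 mat"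
  assumes "A \<in> carrier_mat n m" "z \<in> carrier_vec m"
  shows "(c \<cdot>\<^sub>m A) *\<^sub>v z = c \<cdot>\<^sub>v (A *\<^sub>v z)"
  using assms
  by (intro eq_vecI) (auto simp: index_mult_mat_vec_sum[of _ n m] sum_distrib_left mult.assoc)

lemma zero_mult_mat_vec: "z \<in> carrier_vec m \<Longrightarrow> 0\<^sub>m n m *\<^sub>v z = 0\<^sub>v n"
  by (rule eq_vecI) (auto simp: scalar_prod_def)

lemma transpose_smult_mat: "transpose_mat (c \<cdot>\<^sub>m A) = c \<cdot>\<^sub>m transpose_mat A"
  by (rule eq_matI) auto

lemma mat_trace_mult_comm:
  fixes A B :: "'a::comm_ring_1 mat"
  assumes "A \<in> carrier_mat n m" "B \<in> carrier_mat m n"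
  shows "mat_trace (A * B) = mat_trace (B * A)"
proof -
  have "mat_trace (A * B) = (\<Sum>i<n. \<Sum>j<m. A $$ (i,j) * B $$ (j,i))"
    using assms by (auto simp: mat_trace_def scalar_prod_def atLeast0LessThan intro!: sum.cong)
  also have "\<dots> = (\<Sum>j<m. \<Sum>i<n. B $$ (j,i) * A $$ (i,j))"
    by (subst sum.swap) (simp add: mult.commute)
  also have "\<dots> = mat_trace (B * A)"
    using assms by (auto simp: mat_trace_def scalar_prod_def atLeast0LessThan intro!: sum.cong)
  finally show ?thesis .
qed

lemma smult_mat_cancel:
  fixes X :: "'a::field mat"
  assumes "a \<cdot>\<^sub>m X = b \<cdot>\<^sub>m X" "a \<noteq> b" "X \<in> carrier_mat n m"
  shows "X = 0\<^sub>m n m"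
proof (rule eq_matI)
  fix i j assume ij: "i < dim_row (0\<^sub>m n m)" "j < dim_col (0\<^sub>m n m)"
  have "(a \<cdot>\<^sub>m X) $$ (i,j) = (b \<cdot>\<^sub>m X) $$ (i,j)" using assms(1) by simp
  with ij assms(2,3) show "X $$ (i,j) = 0\<^sub>m n m $$ (i,j)" by simp
qed (use assms in auto)

lemma mat_diag_dims [simp]: "dim_row (mat_diag n f) = n" "dim_col (mat_diag n f) = n"
  by (simp_all add: mat_diag_def)

lemma mat_diag_index [simp]:
  "i < n \<Longrightarrow> j < n \<Longrightarrow> mat_diag n f $$ (i,j) = (if i = j then f j else 0)"
  by (simp add: mat_diag_def)

lemma mat_diag_mult_vec_index:
  fixes z :: "'a::comm_ring_1 vec"
  assumes "z \<in> carrier_vec n" "a < n"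
  shows "(mat_diag n f *\<^sub>v z) $ a = f a * z $ a"
proof -
  have "(mat_diag n f *\<^sub>v z) $ a = (\<Sum>c<n. mat_diag n f $$ (a,c) * z $ c)"
    using assms by (intro index_mult_mat_vec_sum) auto
  also have "\<dots> = (\<Sum>c<n. if c = a then f a * z $ a else 0)"
    using assms by (intro sum.cong) auto
  finally show ?thesis using assms by simp
qed

lemma mult_inverse_cancel:
  fixes P Q W :: "'a::semiring_1 mat"
  assumes "P \<in> carrier_mat n n" "Q \<in> carrier_mat n n" "P * Q = 1\<^sub>m n" "W \<in> carrier_mat n n"
  shows "P * (Q * W) = W"
  using assms by (simp flip: assoc_mult_mat[of _ n n _ n _ n])

lemma conjugate_mult:
  fixes P Q X Z :: "'a::comm_ring_1 mat"
  assumes "P \<in> carrier_mat n n" "Q \<in> carrier_mat n n" "P * Q = 1\<^sub>m n"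
    and "X \<in> carrier_mat n n" "Z \<in> carrier_mat n n"
  shows "(Q * X * P) * (Q * Z * P) = Q * (X * Z) * P"
  using assms by (simp add: assoc_mult_mat[of _ n n _ n _ n] mult_inverse_cancel mult_carrier_mat)

lemma conjugate_eq_0_iff:
  fixes P Q X :: "'a::comm_ring_1 mat"
  assumes "P \<in> carrier_mat n n" "Q \<in> carrier_mat n n" "P * Q = 1\<^sub>m n"
    and "X \<in> carrier_mat n n"
  shows "Q * X * P = 0\<^sub>m n n \<longleftrightarrow> X = 0\<^sub>m n n"
proof
  assume "Q * X * P = 0\<^sub>m n n"
  then have "P * (Q * X * P) * Q = 0\<^sub>m n n" using assms by simp
  moreover have "P * (Q * X * P) * Q = X"
    using assms by (simp add: assoc_mult_mat[of _ n n _ n _ n] mult_inverse_cancel mult_carrier_mat)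
  ultimately show "X = 0\<^sub>m n n" by simp
qed (use assms in simp)

lemma conjugate_eq_of_mult_eq:
  fixes P Q X Z :: "'a::comm_ring_1 mat"
  assumes "P \<in> carrier_mat n n" "Q \<in> carrier_mat n n" "Q * P = 1\<^sub>m n"
    and "X \<in> carrier_mat n n" "Z \<in> carrier_mat n n" and "X * P = P * Z"
  shows "Q * X * P = Z"
  using assms by (simp add: assoc_mult_mat[of _ n n _ n _ n] mult_inverse_cancel mult_carrier_mat)

section \<open>Resolutions of the identity\<close>

definition resolution_of_identity :: "nat \<Rightarrow> nat \<Rightarrow> (nat \<Rightarrow> 'a::comm_ring_1 mat) \<Rightarrow> bool" where
  "resolution_of_identity n d F \<longleftrightarrow>
     (\<forall>i\<le>d. F i \<in> carrier_mat n n) \<and>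
     (\<forall>k<n. \<forall>l<n. (\<Sum>i\<le>d. F i $$ (k,l)) = (if k = l then 1 else 0))"

context
  fixes n d :: nat and F :: "nat \<Rightarrow> 'a::comm_ring_1 mat"
  assumes F: "resolution_of_identity n d F"
begin

private lemma resolution_carrier: "i \<le> d \<Longrightarrow> F i \<in> carrier_mat n n"
  and resolution_sum_index: "k < n \<Longrightarrow> l < n \<Longrightarrow> (\<Sum>i\<le>d. F i $$ (k,l)) = (if k = l then 1 else 0)"
  using F unfolding resolution_of_identity_def by auto

lemma resolution_sum_mult_right:
  assumes "X \<in> carrier_mat r n" "a < r" "b < n"
  shows "(\<Sum>m\<le>d. (X * F m) $$ (a,b)) = X $$ (a,b)"
proof -
  have "(\<Sum>m\<le>d. (X * F m) $$ (a,b)) = (\<Sum>m\<le>d. \<Sum>c<n. X $$ (a,c) * F m $$ (c,b))"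
    using assms resolution_carrier by (intro sum.cong refl index_mult_mat_sum) auto
  also have "\<dots> = (\<Sum>c<n. X $$ (a,c) * (\<Sum>m\<le>d. F m $$ (c,b)))"
    by (subst sum.swap) (simp add: sum_distrib_left)
  also have "\<dots> = (\<Sum>c<n. if c = b then X $$ (a,c) else 0)"
    using assms resolution_sum_index by (intro sum.cong) auto
  finally show ?thesis using assms by simp
qed

lemma resolution_sum_mult_left:
  assumes "X \<in> carrier_mat n r" "a < n" "b < r"
  shows "(\<Sum>m\<le>d. (F m * X) $$ (a,b)) = X $$ (a,b)"
proof -
  have "(\<Sum>m\<le>d. (F m * X) $$ (a,b)) = (\<Sum>m\<le>d. \<Sum>c<n. F m $$ (a,c) * X $$ (c,b))"
    using assms resolution_carrier by (intro sum.cong refl index_mult_mat_sum) auto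
  also have "\<dots> = (\<Sum>c<n. (\<Sum>m\<le>d. F m $$ (a,c)) * X $$ (c,b))"
    by (subst sum.swap) (simp add: sum_distrib_right)
  also have "\<dots> = (\<Sum>c<n. if a = c then X $$ (c,b) else 0)"
    using assms resolution_sum_index by (intro sum.cong) auto
  finally show ?thesis using assms by simp
qed

lemma resolution_sum_mult_vec:
  assumes "z \<in> carrier_vec n" "a < n"
  shows "(\<Sum>m\<le>d. (F m *\<^sub>v z) $ a) = z $ a"
proof -
  have "(\<Sum>m\<le>d. (F m *\<^sub>v z) $ a) = (\<Sum>m\<le>d. \<Sum>c<n. F m $$ (a,c) * z $ c)"
    using assms resolution_carrier by (intro sum.cong refl index_mult_mat_vec_sum) auto
  also have "\<dots> = (\<Sum>c<n. (\<Sum>m\<le>d. F m $$ (a,c)) * z $ c)"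
    by (subst sum.swap) (simp add: sum_distrib_right)
  also have "\<dots> = (\<Sum>c<n. if a = c then z $ c else 0)"
    using assms resolution_sum_index by (intro sum.cong) auto
  finally show ?thesis using assms by simp
qed

lemma resolution_mult_right_single:
  assumes X: "X \<in> carrier_mat n n" and j: "j \<le> d"
    and zero: "\<And>m. m \<le> d \<Longrightarrow> m \<noteq> j \<Longrightarrow> X * F m = 0\<^sub>m n n"
  shows "X * F j = X"
proof (rule eq_matI)
  fix a b assume "a < dim_row X" "b < dim_col X"
  with X have ab: "a < n" "b < n" by auto
  have "(X * F j) $$ (a,b) = (\<Sum>m\<le>d. (X * F m) $$ (a,b))"
    using j ab zero by (subst sum.remove[of _ j]) (auto intro!: sum.neutral[symmetric])
  then show "(X * F j) $$ (a,b) = X $$ (a,b)"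
    using resolution_sum_mult_right[OF X ab] by simp
qed (use X j resolution_carrier in auto)

lemma resolution_mult_left_single:
  assumes X: "X \<in> carrier_mat n n" and j: "j \<le> d"
    and zero: "\<And>m. m \<le> d \<Longrightarrow> m \<noteq> j \<Longrightarrow> F m * X = 0\<^sub>m n n"
  shows "F j * X = X"
proof (rule eq_matI)
  fix a b assume "a < dim_row X" "b < dim_col X"
  with X have ab: "a < n" "b < n" by auto
  have "(F j * X) $$ (a,b) = (\<Sum>m\<le>d. (F m * X) $$ (a,b))"
    using j ab zero by (subst sum.remove[of _ j]) (auto intro!: sum.neutral[symmetric])
  then show "(F j * X) $$ (a,b) = X $$ (a,b)"
    using resolution_sum_mult_left[OF X ab] by simp
qed (use X j resolution_carrier in auto)

lemma resolution_of_identity_conjugate: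
  assumes P: "P \<in> carrier_mat n n" and Q: "Q \<in> carrier_mat n n" and QP: "Q * P = 1\<^sub>m n"
  shows "resolution_of_identity n d (\<lambda>i. Q * F i * P)"
  unfolding resolution_of_identity_def
proof (intro conjI allI impI)
  fix k l assume kl: "k < n" "l < n"
  have "(\<Sum>i\<le>d. (Q * F i * P) $$ (k,l)) = (\<Sum>i\<le>d. \<Sum>b<n. (Q * F i) $$ (k,b) * P $$ (b,l))"
    using P Q resolution_carrier kl by (intro sum.cong refl index_mult_mat_sum) auto
  also have "\<dots> = (\<Sum>b<n. (\<Sum>i\<le>d. (Q * F i) $$ (k,b)) * P $$ (b,l))"
    by (subst sum.swap) (simp add: sum_distrib_right)
  also have "\<dots> = (\<Sum>b<n. Q $$ (k,b) * P $$ (b,l))"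
    using Q kl by (intro sum.cong refl) (simp add: resolution_sum_mult_right)
  also have "\<dots> = (Q * P) $$ (k,l)"
    using P Q kl by (intro index_mult_mat_sum[symmetric]) auto
  finally show "(\<Sum>i\<le>d. (Q * F i * P) $$ (k,l)) = (if k = l then 1 else 0)"
    using QP kl by simp
qed (use P Q resolution_carrier in auto)

end

lemma resolution_of_identity_transpose_conjugate:
  fixes F :: "nat \<Rightarrow> 'a::field mat" and k :: "nat \<Rightarrow> 'a"
  assumes F: "resolution_of_identity n d F" and k: "\<forall>i<n. k i \<noteq> 0"
  shows "resolution_of_identity n d
           (\<lambda>m. mat_diag n (\<lambda>i. inverse (k i)) * transpose_mat (F m) * mat_diag n k)"
  unfolding resolution_of_identity_def
proof (intro conjI allI impI)
  fix a b assume ab: "a < n" "b < n"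
  have Fc: "\<And>m. m \<le> d \<Longrightarrow> F m \<in> carrier_mat n n"
    using F unfolding resolution_of_identity_def by auto
  have "(\<Sum>m\<le>d. (mat_diag n (\<lambda>i. inverse (k i)) * transpose_mat (F m) * mat_diag n k) $$ (a,b))
      = (\<Sum>m\<le>d. inverse (k a) * F m $$ (b,a) * k b)"
  proof (intro sum.cong refl)
    fix m assume "m \<in> {..d}"
    then have "transpose_mat (F m) \<in> carrier_mat n n" using Fc by simp
    then show "(mat_diag n (\<lambda>i. inverse (k i)) * transpose_mat (F m) * mat_diag n k) $$ (a,b)
        = inverse (k a) * F m $$ (b,a) * k b"
      using ab by (simp add: mat_diag_mult_left[of _ n n] mat_diag_mult_right[of _ n n])
  qed
  also have "\<dots> = inverse (k a) * (\<Sum>m\<le>d. F m $$ (b,a)) * k b"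
    by (simp add: sum_distrib_left sum_distrib_right)
  finally show "(\<Sum>m\<le>d. (mat_diag n (\<lambda>i. inverse (k i)) * transpose_mat (F m) * mat_diag n k) $$ (a,b))
      = (if a = b then 1 else 0)"
    using F k ab unfolding resolution_of_identity_def by auto
qed (use F in \<open>auto simp: resolution_of_identity_def\<close>)

lemma left_right_eigen_resolutions_eq:
  fixes F G :: "nat \<Rightarrow> 'a::field mat"
  assumes F: "resolution_of_identity n d F" and G: "resolution_of_identity n d G"
    and Y: "Y \<in> carrier_mat n n"
    and YF: "\<And>m. m \<le> d \<Longrightarrow> Y * F m = \<theta> m \<cdot>\<^sub>m F m"
    and GY: "\<And>m. m \<le> d \<Longrightarrow> G m * Y = \<theta> m \<cdot>\<^sub>m G m"
    and \<theta>: "\<And>i j. i \<le> d \<Longrightarrow> j \<le> d \<Longrightarrow> i \<noteq> j \<Longrightarrow> \<theta> i \<noteq> \<theta> j"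
    and j: "j \<le> d"
  shows "G j = F j"
proof -
  have Fc: "\<And>m. m \<le> d \<Longrightarrow> F m \<in> carrier_mat n n"
    and Gc: "\<And>m. m \<le> d \<Longrightarrow> G m \<in> carrier_mat n n"
    using F G unfolding resolution_of_identity_def by auto
  have orth: "G m * F l = 0\<^sub>m n n" if ml: "m \<le> d" "l \<le> d" "m \<noteq> l" for m l
  proof -
    have "\<theta> m \<cdot>\<^sub>m (G m * F l) = (G m * Y) * F l"
      using GY Gc Fc ml by (simp add: mult_smult_assoc_mat[of _ n n _ n])
    also have "\<dots> = G m * (Y * F l)"
      using Gc Fc Y ml by (simp add: assoc_mult_mat[of _ n n _ n _ n])
    also have "\<dots> = \<theta> l \<cdot>\<^sub>m (G m * F l)"
      using YF Gc Fc ml by (simp add: mult_smult_distrib[of _ n n _ n])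
    finally show ?thesis
      using smult_mat_cancel \<theta>[OF ml] Gc Fc ml by (metis mult_carrier_mat)
  qed
  have "G j * F j = G j"
    using resolution_mult_right_single[OF F Gc[OF j] j] orth j by blast
  moreover have "G j * F j = F j"
    using resolution_mult_left_single[OF G Fc[OF j] j] orth j by metis
  ultimately show ?thesis by simp
qed

lemma eigen_resolution_mult_eigenvector:
  fixes F :: "nat \<Rightarrow> 'a::field mat"
  assumes F: "resolution_of_identity n d F" and Y: "Y \<in> carrier_mat n n"
    and FY: "\<And>m. m \<le> d \<Longrightarrow> F m * Y = \<theta> m \<cdot>\<^sub>m F m"
    and \<theta>: "\<And>i j. i \<le> d \<Longrightarrow> j \<le> d \<Longrightarrow> i \<noteq> j \<Longrightarrow> \<theta> i \<noteq> \<theta> j"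
    and z: "z \<in> carrier_vec n" and Yz: "Y *\<^sub>v z = \<theta> k \<cdot>\<^sub>v z" and k: "k \<le> d"
    and m: "m \<le> d"
  shows "F m *\<^sub>v z = (if m = k then z else 0\<^sub>v n)"
proof -
  have Fc: "\<And>m. m \<le> d \<Longrightarrow> F m \<in> carrier_mat n n"
    using F unfolding resolution_of_identity_def by auto
  have other: "F l *\<^sub>v z = 0\<^sub>v n" if l: "l \<le> d" "l \<noteq> k" for l
  proof (rule eq_vecI)
    fix a assume "a < dim_vec (0\<^sub>v n :: 'a vec)"
    then have a: "a < n" by simp
    have "F l *\<^sub>v (Y *\<^sub>v z) = (F l * Y) *\<^sub>v z"
      using Fc[OF l(1)] Y z by simp
    then have "\<theta> k \<cdot>\<^sub>v (F l *\<^sub>v z) = \<theta> l \<cdot>\<^sub>v (F l *\<^sub>v z)"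
      using Fc[OF l(1)] z FY[OF l(1)] unfolding Yz
      by (simp add: mult_mat_vec smult_mult_mat_vec)
    from arg_cong[OF this, of "\<lambda>v. v $ a"]
    have "\<theta> k * (F l *\<^sub>v z) $ a = \<theta> l * (F l *\<^sub>v z) $ a"
      using Fc[OF l(1)] a by simp
    then show "(F l *\<^sub>v z) $ a = 0\<^sub>v n $ a"
      using \<theta>[OF l(1) k] l a by simp
  qed (use Fc[OF l(1)] in auto)
  have "F k *\<^sub>v z = z"
  proof (rule eq_vecI)
    fix a assume "a < dim_vec z"
    then have a: "a < n" using z by simp
    have "(F k *\<^sub>v z) $ a = (\<Sum>l\<le>d. (F l *\<^sub>v z) $ a)"
      using k a other by (subst sum.remove[of _ k]) (auto intro!: sum.neutral[symmetric])
    then show "(F k *\<^sub>v z) $ a = z $ a"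
      using resolution_sum_mult_vec[OF F z a] by simp
  qed (use Fc[OF k] z in auto)
  then show ?thesis using other m by simp
qed

section \<open>Irreducible tridiagonal matrices\<close>

definition tridiagonal :: "nat \<Rightarrow> 'a::zero mat \<Rightarrow> bool" where
  "tridiagonal d Y \<longleftrightarrow> Y \<in> carrier_mat (d+1) (d+1) \<and>
     (\<forall>i\<le>d. \<forall>j\<le>d. (i > j + 1 \<or> j > i + 1) \<longrightarrow> Y $$ (i,j) = 0)"

definition irreducible_tridiagonal :: "nat \<Rightarrow> 'a::zero mat \<Rightarrow> bool" where
  "irreducible_tridiagonal d Y \<longleftrightarrow>
     tridiagonal d Y \<and> (\<forall>i<d. Y $$ (i,i+1) \<noteq> 0 \<and> Y $$ (i+1,i) \<noteq> 0)"

lemma tridiagonal_mult_vec_index: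
  fixes Y :: "'a::comm_ring_1 mat"
  assumes Y: "tridiagonal d Y" and z: "z \<in> carrier_vec (d+1)" and i: "i \<le> d"
  shows "(Y *\<^sub>v z) $ i = (if 0 < i then Y $$ (i,i-1) * z $ (i-1) else 0) + Y $$ (i,i) * z $ i
                        + (if i < d then Y $$ (i,i+1) * z $ (i+1) else 0)"
proof -
  have Yc: "Y \<in> carrier_mat (d+1) (d+1)" using Y by (simp add: tridiagonal_def)
  let ?lo = "\<lambda>c. if 0 < i \<and> c = i - 1 then Y $$ (i,i-1) * z $ (i-1) else 0"
  let ?mid = "\<lambda>c. if c = i then Y $$ (i,i) * z $ i else 0"
  let ?up = "\<lambda>c. if i < d \<and> c = i + 1 then Y $$ (i,i+1) * z $ (i+1) else 0"
  have "(Y *\<^sub>v z) $ i = (\<Sum>c<d+1. Y $$ (i,c) * z $ c)"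
    using Yc z i by (intro index_mult_mat_vec_sum) auto
  also have "\<dots> = (\<Sum>c<d+1. ?lo c + ?mid c + ?up c)"
  proof (intro sum.cong refl)
    fix c assume "c \<in> {..<d+1}"
    show "Y $$ (i,c) * z $ c = ?lo c + ?mid c + ?up c"
    proof (cases "c + 1 = i \<or> c = i \<or> c = i + 1")
      case False
      then have "i > c + 1 \<or> c > i + 1" by linarith
      with \<open>c \<in> {..<d+1}\<close> Y i False show ?thesis by (auto simp: tridiagonal_def)
    qed (use \<open>c \<in> {..<d+1}\<close> in auto)
  qed
  also have "\<dots> = (\<Sum>c<d+1. ?lo c) + (\<Sum>c<d+1. ?mid c) + (\<Sum>c<d+1. ?up c)"
    by (simp add: sum.distrib)
  also have "(\<Sum>c<d+1. ?lo c) = (if 0 < i then Y $$ (i,i-1) * z $ (i-1) else 0)"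
    using i by (cases "0 < i") auto
  also have "(\<Sum>c<d+1. ?mid c) = Y $$ (i,i) * z $ i"
    using i by simp
  also have "(\<Sum>c<d+1. ?up c) = (if i < d then Y $$ (i,i+1) * z $ (i+1) else 0)"
    by (cases "i < d") auto
  finally show ?thesis .
qed

lemma irreducible_tridiagonal_eigenvector_eq_0:
  fixes Y :: "'a::field mat"
  assumes Y: "irreducible_tridiagonal d Y" and z: "z \<in> carrier_vec (d+1)"
    and Yz: "Y *\<^sub>v z = \<theta> \<cdot>\<^sub>v z" and z0: "z $ 0 = 0"
  shows "z = 0\<^sub>v (d+1)"
proof -
  have tri: "tridiagonal d Y" and nz: "\<And>i. i < d \<Longrightarrow> Y $$ (i,i+1) \<noteq> 0"
    using Y by (auto simp: irreducible_tridiagonal_def)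
  have "z $ i = 0" if "i \<le> d" for i
    using that
  proof (induction i rule: less_induct)
    case (less i)
    show ?case
    proof (cases i)
      case 0
      with z0 show ?thesis by simp
    next
      case (Suc k)
      with less have k: "k < d" and zk: "z $ k = 0" and zk': "0 < k \<Longrightarrow> z $ (k-1) = 0"
        by auto
      have "(Y *\<^sub>v z) $ k = \<theta> * z $ k" using Yz z k by simp
      then have "Y $$ (k,k+1) * z $ (k+1) = 0"
        using tridiagonal_mult_vec_index[OF tri z, of k] k zk zk' by (simp split: if_splits)
      with nz[OF k] Suc show ?thesis by simp
    qed
  qed
  with z show ?thesis by (intro eq_vecI) auto
qed

lemma irreducible_tridiagonal_eigenvector_unique:
  fixes Y :: "'a::field mat"
  assumes Y: "irreducible_tridiagonal d Y"
    and z: "z \<in> carrier_vec (d+1)" and Yz: "Y *\<^sub>v z = \<theta> \<cdot>\<^sub>v z"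
    and u: "u \<in> carrier_vec (d+1)" and Yu: "Y *\<^sub>v u = \<theta> \<cdot>\<^sub>v u"
    and first: "z $ 0 = c * u $ 0"
  shows "z = c \<cdot>\<^sub>v u"
proof -
  have Yc: "Y \<in> carrier_mat (d+1) (d+1)"
    using Y by (simp add: irreducible_tridiagonal_def tridiagonal_def)
  have "Y *\<^sub>v (z - c \<cdot>\<^sub>v u) = \<theta> \<cdot>\<^sub>v (z - c \<cdot>\<^sub>v u)"
    using Yc z u Yz Yu
    by (intro eq_vecI) (auto simp: mult_minus_distrib_mat_vec mult_mat_vec algebra_simps)
  then have "z - c \<cdot>\<^sub>v u = 0\<^sub>v (d+1)"
    using irreducible_tridiagonal_eigenvector_eq_0[OF Y] z u first by simp
  show ?thesis
  proof (rule eq_vecI)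
    fix i assume "i < dim_vec (c \<cdot>\<^sub>v u)"
    then have i: "i < d+1" using u by simp
    with \<open>z - c \<cdot>\<^sub>v u = 0\<^sub>v (d+1)\<close> have "(z - c \<cdot>\<^sub>v u) $ i = 0" by simp
    with i z u show "z $ i = (c \<cdot>\<^sub>v u) $ i" by simp
  qed (use z u in simp)
qed

definition tridiagonal_symmetrizer :: "'a::field mat \<Rightarrow> nat \<Rightarrow> 'a" where
  "tridiagonal_symmetrizer Y i = (\<Prod>j<i. Y $$ (j,j+1) / Y $$ (j+1,j))"

lemma tridiagonal_symmetrizer_nonzero:
  assumes "irreducible_tridiagonal d Y" "i \<le> d"
  shows "tridiagonal_symmetrizer Y i \<noteq> 0"
  using assms by (auto simp: irreducible_tridiagonal_def tridiagonal_symmetrizer_def)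

lemma tridiagonal_symmetrizer_mult:
  fixes Y :: "'a::field mat"
  assumes Y: "irreducible_tridiagonal d Y"
  shows "mat_diag (d+1) (tridiagonal_symmetrizer Y) * Y
       = transpose_mat Y * mat_diag (d+1) (tridiagonal_symmetrizer Y)"
proof -
  let ?k = "tridiagonal_symmetrizer Y"
  have Yc: "Y \<in> carrier_mat (d+1) (d+1)" and YT: "transpose_mat Y \<in> carrier_mat (d+1) (d+1)"
    and tri: "\<forall>i\<le>d. \<forall>j\<le>d. (i > j + 1 \<or> j > i + 1) \<longrightarrow> Y $$ (i,j) = 0"
    and nz: "\<forall>i<d. Y $$ (i,i+1) \<noteq> 0 \<and> Y $$ (i+1,i) \<noteq> 0"
    using Y by (auto simp: irreducible_tridiagonal_def tridiagonal_def)
  have step: "?k (Suc i) * Y $$ (i+1,i) = ?k i * Y $$ (i,i+1)" if "i < d" for i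
    using nz that by (simp add: tridiagonal_symmetrizer_def)
  have sym: "?k a * Y $$ (a,b) = Y $$ (b,a) * ?k b" if ab: "a \<le> d" "b \<le> d" for a b
  proof (cases "b = a + 1 \<or> a = b + 1 \<or> a = b")
    case True
    with ab step[of a] step[of b] show ?thesis by (auto simp: mult.commute)
  next
    case False
    then have "a > b + 1 \<or> b > a + 1" by linarith
    with ab tri show ?thesis by auto
  qed
  show ?thesis
    unfolding mat_diag_mult_left[OF Yc] mat_diag_mult_right[OF YT]
    using sym Yc by (intro eq_matI) auto
qed

section \<open>Primitive idempotents of an irreducible tridiagonal matrix\<close>

locale tridiagonal_spectral =
  fixes d :: nat and Y :: "'a::field mat" and \<theta> :: "nat \<Rightarrow> 'a" and F :: "nat \<Rightarrow> 'a mat"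
  assumes irreducible: "irreducible_tridiagonal d Y"
    and resolution: "resolution_of_identity (d+1) d F"
    and Y_mult_F: "\<And>m. m \<le> d \<Longrightarrow> Y * F m = \<theta> m \<cdot>\<^sub>m F m"
    and eigenvalues_distinct: "\<And>i j. i \<le> d \<Longrightarrow> j \<le> d \<Longrightarrow> i \<noteq> j \<Longrightarrow> \<theta> i \<noteq> \<theta> j"
begin

lemma Y_carrier: "Y \<in> carrier_mat (d+1) (d+1)"
  using irreducible by (simp add: irreducible_tridiagonal_def tridiagonal_def)

lemma F_carrier: "m \<le> d \<Longrightarrow> F m \<in> carrier_mat (d+1) (d+1)"
  using resolution by (simp add: resolution_of_identity_def)

lemma F_dims [simp]: "m \<le> d \<Longrightarrow> dim_row (F m) = d+1" "m \<le> d \<Longrightarrow> dim_col (F m) = d+1"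
  using F_carrier by auto

abbreviation K :: "'a mat" where
  "K \<equiv> mat_diag (d+1) (tridiagonal_symmetrizer Y)"

abbreviation K_inv :: "'a mat" where
  "K_inv \<equiv> mat_diag (d+1) (\<lambda>i. inverse (tridiagonal_symmetrizer Y i))"

lemma K_inv_transpose_F_K_mult_Y:
  assumes m: "m \<le> d"
  shows "K_inv * transpose_mat (F m) * K * Y = \<theta> m \<cdot>\<^sub>m (K_inv * transpose_mat (F m) * K)"
proof -
  let ?n = "d+1"
  have FT: "transpose_mat (F m) \<in> carrier_mat ?n ?n" using F_carrier m by simp
  have "K_inv * transpose_mat (F m) * K * Y = K_inv * (transpose_mat (F m) * (K * Y))"
    using FT Y_carrier by (simp add: assoc_mult_mat[of _ ?n ?n _ ?n _ ?n])
  also have "\<dots> = K_inv * (transpose_mat (Y * F m) * K)"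
    unfolding tridiagonal_symmetrizer_mult[OF irreducible] using FT Y_carrier F_carrier[OF m]
    by (simp add: assoc_mult_mat[of _ ?n ?n _ ?n _ ?n] transpose_mult[of _ ?n ?n _ ?n])
  also have "\<dots> = \<theta> m \<cdot>\<^sub>m (K_inv * transpose_mat (F m) * K)"
    unfolding Y_mult_F[OF m] transpose_smult_mat using FT
    by (simp add: mult_smult_assoc_mat[of _ ?n ?n _ ?n] mult_smult_distrib[of _ ?n ?n _ ?n]
        assoc_mult_mat[of _ ?n ?n _ ?n _ ?n])
  finally show ?thesis .
qed

lemma K_inv_transpose_F_K: "m \<le> d \<Longrightarrow> K_inv * transpose_mat (F m) * K = F m"
proof (rule left_right_eigen_resolutions_eq[OF resolution _ Y_carrier Y_mult_F K_inv_transpose_F_K_mult_Y eigenvalues_distinct])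
  show "resolution_of_identity (d+1) d (\<lambda>m. K_inv * transpose_mat (F m) * K)"
    using tridiagonal_symmetrizer_nonzero[OF irreducible]
    by (intro resolution_of_identity_transpose_conjugate[OF resolution]) simp
qed

lemma F_mult_Y:
  assumes "m \<le> d"
  shows "F m * Y = \<theta> m \<cdot>\<^sub>m F m"
  using K_inv_transpose_F_K_mult_Y[OF assms] unfolding K_inv_transpose_F_K[OF assms] .

lemma F_index_swap:
  assumes "m \<le> d" "i \<le> d" "j \<le> d"
  shows "tridiagonal_symmetrizer Y i * F m $$ (i,j) = F m $$ (j,i) * tridiagonal_symmetrizer Y j"
proof -
  have FT: "transpose_mat (F m) \<in> carrier_mat (d+1) (d+1)" using F_carrier assms(1) by simp
  have "F m $$ (i,j) = (K_inv * transpose_mat (F m) * K) $$ (i,j)"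
    using K_inv_transpose_F_K[OF assms(1)] by simp
  also have "\<dots> = inverse (tridiagonal_symmetrizer Y i) * F m $$ (j,i) * tridiagonal_symmetrizer Y j"
    unfolding mat_diag_mult_left[OF FT] mat_diag_mult_right[OF mat_carrier]
    using assms F_carrier by simp
  finally have "F m $$ (i,j) = \<dots>" .
  then show ?thesis
    using tridiagonal_symmetrizer_nonzero[OF irreducible assms(2)] by (simp add: field_simps)
qed

lemma F_diag_F_index:
  assumes "a \<le> d" "b \<le> d" "i \<le> d" "j \<le> d"
  shows "(F a * mat_diag (d+1) t * F b) $$ (i,j) = (\<Sum>c\<le>d. F a $$ (i,c) * t c * F b $$ (c,j))"
proof -
  have "(F a * mat_diag (d+1) t * F b) $$ (i,j) = (\<Sum>c<d+1. (F a * mat_diag (d+1) t) $$ (i,c) * F b $$ (c,j))"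
    using F_carrier assms by (intro index_mult_mat_sum) auto
  also have "\<dots> = (\<Sum>c<d+1. F a $$ (i,c) * t c * F b $$ (c,j))"
    using F_carrier assms by (intro sum.cong refl) (simp add: mat_diag_mult_right[of _ "d+1"])
  finally show ?thesis by (simp add: lessThan_Suc_atMost)
qed

lemma F_diag_F_eq_0_swap:
  assumes a: "a \<le> d" and b: "b \<le> d"
    and zero: "F b * mat_diag (d+1) t * F a = 0\<^sub>m (d+1) (d+1)"
  shows "F a * mat_diag (d+1) t * F b = 0\<^sub>m (d+1) (d+1)"
proof (rule eq_matI)
  let ?k = "tridiagonal_symmetrizer Y"
  fix i j assume "i < dim_row (0\<^sub>m (d+1) (d+1) :: 'a mat)" "j < dim_col (0\<^sub>m (d+1) (d+1) :: 'a mat)"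
  then have ij: "i \<le> d" "j \<le> d" by auto
  have "?k i * (F a * mat_diag (d+1) t * F b) $$ (i,j)
      = (\<Sum>c\<le>d. (?k i * F a $$ (i,c)) * t c * F b $$ (c,j))"
    using F_diag_F_index[OF a b ij] by (simp add: sum_distrib_left mult.assoc)
  also have "\<dots> = (\<Sum>c\<le>d. F b $$ (j,c) * t c * F a $$ (c,i)) * ?k j"
    using F_index_swap a b ij unfolding sum_distrib_right
    by (intro sum.cong refl) (simp add: algebra_simps)
  also have "\<dots> = (F b * mat_diag (d+1) t * F a) $$ (j,i) * ?k j"
    using F_diag_F_index[OF b a ij(2,1)] by simp
  also have "\<dots> = 0"
    using zero ij by simp
  finally show "(F a * mat_diag (d+1) t * F b) $$ (i,j) = 0\<^sub>m (d+1) (d+1) $$ (i,j)"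
    using tridiagonal_symmetrizer_nonzero[OF irreducible ij(1)] ij by simp
qed (use F_carrier a b in auto)

lemma F_mult_eigenvector:
  assumes "z \<in> carrier_vec (d+1)" "Y *\<^sub>v z = \<theta> k \<cdot>\<^sub>v z" "k \<le> d" "m \<le> d"
  shows "F m *\<^sub>v z = (if m = k then z else 0\<^sub>v (d+1))"
  by (rule eigen_resolution_mult_eigenvector[OF resolution Y_carrier F_mult_Y eigenvalues_distinct assms])

lemma Y_mult_F_mult_vec:
  assumes "m \<le> d" "z \<in> carrier_vec (d+1)"
  shows "Y *\<^sub>v (F m *\<^sub>v z) = \<theta> m \<cdot>\<^sub>v (F m *\<^sub>v z)"
proof -
  have "Y *\<^sub>v (F m *\<^sub>v z) = (Y * F m) *\<^sub>v z"
    using assoc_mult_mat_vec[OF Y_carrier F_carrier assms(2)] assms(1) by simp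
  then show ?thesis
    using assms Y_mult_F smult_mult_mat_vec[OF F_carrier[OF assms(1)] assms(2)] by simp
qed

lemma eigen_expansion:
  assumes S: "S \<subseteq> {..d}" and z: "z \<in> carrier_vec (d+1)"
    and outside: "\<And>j. j \<le> d \<Longrightarrow> j \<notin> S \<Longrightarrow> F j *\<^sub>v z = 0\<^sub>v (d+1)" and a: "a \<le> d"
  shows "z $ a = (\<Sum>m\<in>S. (F m *\<^sub>v z) $ a)"
    and "(Y *\<^sub>v z) $ a = (\<Sum>m\<in>S. \<theta> m * (F m *\<^sub>v z) $ a)"
proof -
  have expand: "x $ a = (\<Sum>m\<in>S. (F m *\<^sub>v x) $ a)"
    if x: "x \<in> carrier_vec (d+1)" and "\<And>j. j \<le> d \<Longrightarrow> j \<notin> S \<Longrightarrow> F j *\<^sub>v x = 0\<^sub>v (d+1)" for x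
  proof -
    have "x $ a = (\<Sum>m\<le>d. (F m *\<^sub>v x) $ a)"
      using resolution_sum_mult_vec[OF resolution x] a by simp
    also have "\<dots> = (\<Sum>m\<in>S. (F m *\<^sub>v x) $ a)"
      using S a that(2) by (intro sum.mono_neutral_right) auto
    finally show ?thesis .
  qed
  show "z $ a = (\<Sum>m\<in>S. (F m *\<^sub>v z) $ a)" by (rule expand[OF z outside])
  have FYz: "F m *\<^sub>v (Y *\<^sub>v z) = \<theta> m \<cdot>\<^sub>v (F m *\<^sub>v z)" if "m \<le> d" for m
  proof -
    have "F m *\<^sub>v (Y *\<^sub>v z) = (F m * Y) *\<^sub>v z"
      using assoc_mult_mat_vec[OF F_carrier Y_carrier z] that by simp
    then show ?thesis
      using that F_mult_Y smult_mult_mat_vec[OF F_carrier[OF that] z] by simp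
  qed
  have "(Y *\<^sub>v z) $ a = (\<Sum>m\<in>S. (F m *\<^sub>v (Y *\<^sub>v z)) $ a)"
    by (rule expand) (use z Y_carrier FYz outside in auto)
  also have "\<dots> = (\<Sum>m\<in>S. \<theta> m * (F m *\<^sub>v z) $ a)"
  proof (intro sum.cong refl)
    fix m assume "m \<in> S"
    with S have m: "m \<le> d" by auto
    show "(F m *\<^sub>v (Y *\<^sub>v z)) $ a = \<theta> m * (F m *\<^sub>v z) $ a"
      using FYz[OF m] F_carrier[OF m] a by simp
  qed
  finally show "(Y *\<^sub>v z) $ a = (\<Sum>m\<in>S. \<theta> m * (F m *\<^sub>v z) $ a)" .
qed

end

section \<open>The identity in the normalizing basis\<close>

lemma tail_identity_algebra:
  fixes \<theta>0 \<theta>1 \<theta>2 c b X Z \<beta> t0 t1 tm ti tp tdm td :: "'a::field"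
  assumes row_sum: "c + b = \<theta>0"
    and w_i: "c * (tm - \<beta>) + b * (tp - \<beta>) = \<theta>1 * (ti - \<beta>)"
    and w_0: "\<theta>0 * (t1 - \<beta>) = \<theta>1 * (t0 - \<beta>)"
    and w_d: "\<theta>0 * (tdm - \<beta>) = \<theta>1 * (td - \<beta>)"
    and r_i: "c * (tm * (tm - \<beta>)) + b * (tp * (tp - \<beta>)) - \<theta>2 * (ti * (ti - \<beta>)) = X + Z * (ti - \<beta>)"
    and r_0: "\<theta>0 * (t1 * (t1 - \<beta>)) - \<theta>2 * (t0 * (t0 - \<beta>)) = X + Z * (t0 - \<beta>)"
    and r_d: "\<theta>0 * (tdm * (tdm - \<beta>)) - \<theta>2 * (td * (td - \<beta>)) = X + Z * (td - \<beta>)"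
    and \<theta>0: "\<theta>0 \<noteq> 0" and td: "td \<noteq> t0"
  shows "\<theta>0 * (tp - t1) * (tm - t1) + \<theta>1 * (ti - t0) * (tdm - tp - tm + t1)
         - \<theta>2 * (ti - t0) * (td - ti) = 0"
proof -
  define x y s w0 w1 wdm wd
    where "x = tm - \<beta>" and "y = tp - \<beta>" and "s = ti - \<beta>" and "w0 = t0 - \<beta>"
      and "w1 = t1 - \<beta>" and "wdm = tdm - \<beta>" and "wd = td - \<beta>"
  then have t: "tm = x + \<beta>" "tp = y + \<beta>" "ti = s + \<beta>" "t0 = w0 + \<beta>"
      "t1 = w1 + \<beta>" "tdm = wdm + \<beta>" "td = wd + \<beta>"
    by simp_all
  define R1 R2 R3 R4 R5 R6 R7
    where "R1 = c + b - \<theta>0"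
      and "R2 = c * x + b * y - \<theta>1 * s"
      and "R3 = \<theta>0 * w1 - \<theta>1 * w0"
      and "R4 = \<theta>0 * wdm - \<theta>1 * wd"
      and "R5 = c * ((x + \<beta>) * x) + b * ((y + \<beta>) * y) - \<theta>2 * ((s + \<beta>) * s) - X - Z * s"
      and "R6 = \<theta>0 * ((w1 + \<beta>) * w1) - \<theta>2 * ((w0 + \<beta>) * w0) - X - Z * w0"
      and "R7 = \<theta>0 * ((wdm + \<beta>) * wdm) - \<theta>2 * ((wd + \<beta>) * wd) - X - Z * wd"
  have R: "R1 = 0" "R2 = 0" "R3 = 0" "R4 = 0" "R5 = 0" "R6 = 0" "R7 = 0"
    using assms unfolding R1_def R2_def R3_def R4_def R5_def R6_def R7_def t by simp_all
  \<comment> \<open>the equations at rows \<open>0\<close> and \<open>d\<close> determine \<open>Z\<close>, using \<open>td \<noteq> t0\<close>\<close>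
  define k where "k = \<theta>1 * (w1 * wd - wdm * w0)"
  have "\<theta>0 * k = \<theta>1 * wd * R3 - \<theta>1 * w0 * R4"
    unfolding k_def R3_def R4_def by (simp add: algebra_simps)
  with R \<theta>0 have k: "k = 0" by simp
  define Z0 where "Z0 = \<beta> * (\<theta>1 - \<theta>2) + \<theta>1 * (wdm + w1) - \<theta>2 * (wd + w0)"
  have "(Z - Z0) * (wd - w0) = - (R7 - R6) + (wdm + \<beta>) * R4 - (w1 + \<beta>) * R3 - k"
    unfolding Z0_def R3_def R4_def R6_def R7_def k_def by (simp add: algebra_simps)
  with R k td t have Z: "Z = Z0" by simp
  have "\<theta>0 * (y - w1) * (x - w1) + \<theta>1 * (s - w0) * (wdm - y - x + w1) - \<theta>2 * (s - w0) * (wd - s)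
      = - ((R5 - (x + y + \<beta>) * R2 + x * y * R1) + (Z - Z0) * (s - w0) + (w1 + \<beta>) * R3 - R6)
        - (x + y - w1) * R3"
    unfolding R1_def R2_def R3_def R5_def R6_def Z0_def by (simp add: algebra_simps)
  also have "\<dots> = 0" using R Z by simp
  finally have "\<theta>0 * (y - w1) * (x - w1) + \<theta>1 * (s - w0) * (wdm - y - x + w1) - \<theta>2 * (s - w0) * (wd - s) = 0" .
  moreover have "tp - t1 = y - w1" "tm - t1 = x - w1" "ti - t0 = s - w0" "td - ti = wd - s"
    "tdm - tp - tm + t1 = wdm - y - x + w1"
    unfolding t by simp_all
  ultimately show ?thesis by simp
qed

text \<open>
  The hypotheses of the theorem in the normalizing basis: \<open>Y\<close> represents \<open>A\<close>, \<open>F i\<close> the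
  primitive idempotent \<open>E\<^sub>i\<close>, and \<open>T = diag t\<close> represents \<open>A* = \<Sum>\<^sub>i t i E*\<^sub>i\<close>.
\<close>

locale normalized_tail = tridiagonal_spectral +
  fixes t :: "nat \<Rightarrow> 'a"
  assumes three_le_d: "3 \<le> d"
    and diagonal_zero: "\<And>i. i \<le> d \<Longrightarrow> Y $$ (i,i) = 0"
    and row_sums: "\<And>i. i \<le> d \<Longrightarrow> (\<Sum>j\<le>d. Y $$ (i,j)) = \<theta> 0"
    and t_distinct: "\<And>i j. i \<le> d \<Longrightarrow> j \<le> d \<Longrightarrow> i \<noteq> j \<Longrightarrow> t i \<noteq> t j"
    and tail_0: "\<And>j. 2 \<le> j \<Longrightarrow> j \<le> d \<Longrightarrow> F 0 * mat_diag (d+1) t * F j = 0\<^sub>m (d+1) (d+1)"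
    and tail_1: "\<And>j. 3 \<le> j \<Longrightarrow> j \<le> d \<Longrightarrow> F 1 * mat_diag (d+1) t * F j = 0\<^sub>m (d+1) (d+1)"
begin

abbreviation T :: "'a mat" where
  "T \<equiv> mat_diag (d+1) t"

definition ones :: "'a vec" where
  "ones = vec (d+1) (\<lambda>_. 1)"

definition w :: "'a vec" where
  "w = F 1 *\<^sub>v (T *\<^sub>v ones)"

lemma ones_carrier: "ones \<in> carrier_vec (d+1)"
  by (simp add: ones_def)

lemma ones_dim [simp]: "dim_vec ones = d+1"
  by (simp add: ones_def)

lemma ones_index [simp]: "a \<le> d \<Longrightarrow> ones $ a = 1"
  by (simp add: ones_def)

lemma w_carrier: "w \<in> carrier_vec (d+1)"
proof (rule carrier_vecI)
  show "dim_vec w = d+1" using three_le_d F_dims(1)[of 1] by (simp add: w_def)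
qed

lemma T_mult_vec_index: "z \<in> carrier_vec (d+1) \<Longrightarrow> a \<le> d \<Longrightarrow> (T *\<^sub>v z) $ a = t a * z $ a"
  using mat_diag_mult_vec_index[of z "d+1" a t] by simp

lemma Y_mult_vec_index:
  assumes "z \<in> carrier_vec (d+1)" "i \<le> d"
  shows "(Y *\<^sub>v z) $ i = (if 0 < i then Y $$ (i,i-1) * z $ (i-1) else 0)
                        + (if i < d then Y $$ (i,i+1) * z $ (i+1) else 0)"
  using tridiagonal_mult_vec_index[OF _ assms] irreducible diagonal_zero[OF assms(2)]
  by (simp add: irreducible_tridiagonal_def)

lemma Y_mult_ones: "Y *\<^sub>v ones = \<theta> 0 \<cdot>\<^sub>v ones"
proof (rule eq_vecI)
  fix a assume "a < dim_vec (\<theta> 0 \<cdot>\<^sub>v ones)"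
  then have a: "a \<le> d" by (simp add: ones_def)
  have "(Y *\<^sub>v ones) $ a = (\<Sum>c<d+1. Y $$ (a,c) * ones $ c)"
    using Y_carrier ones_carrier a by (intro index_mult_mat_vec_sum) auto
  also have "\<dots> = (\<Sum>j\<le>d. Y $$ (a,j))"
    by (simp add: ones_def lessThan_Suc_atMost)
  finally show "(Y *\<^sub>v ones) $ a = (\<theta> 0 \<cdot>\<^sub>v ones) $ a"
    using row_sums a by (simp add: ones_def)
qed (use Y_carrier in \<open>simp add: ones_def\<close>)

lemma Y_row_sum:
  assumes "i \<le> d"
  shows "(if 0 < i then Y $$ (i,i-1) else 0) + (if i < d then Y $$ (i,i+1) else 0) = \<theta> 0"
  using Y_mult_vec_index[OF ones_carrier assms] Y_mult_ones assms by (simp add: ones_def)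

lemma eigenvector_theta_0:
  assumes "z \<in> carrier_vec (d+1)" "Y *\<^sub>v z = \<theta> 0 \<cdot>\<^sub>v z"
  shows "z = z $ 0 \<cdot>\<^sub>v ones"
  by (rule irreducible_tridiagonal_eigenvector_unique[OF irreducible assms ones_carrier Y_mult_ones])
    (simp add: ones_def)

lemma F_mult_ones: "m \<le> d \<Longrightarrow> F m *\<^sub>v ones = (if m = 0 then ones else 0\<^sub>v (d+1))"
  by (rule F_mult_eigenvector[OF ones_carrier Y_mult_ones]) auto

lemma F_T_F_mult_vec_eq_0:
  assumes "F j * T * F k = 0\<^sub>m (d+1) (d+1)" "j \<le> d" "k \<le> d" "z \<in> carrier_vec (d+1)"
  shows "F j *\<^sub>v (T *\<^sub>v (F k *\<^sub>v z)) = 0\<^sub>v (d+1)"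
proof -
  have Fj: "F j \<in> carrier_mat (d+1) (d+1)" and Fk: "F k \<in> carrier_mat (d+1) (d+1)"
    using assms F_carrier by auto
  have "F j *\<^sub>v (T *\<^sub>v (F k *\<^sub>v z)) = (F j * T * F k) *\<^sub>v z"
    using assoc_mult_mat_vec[OF mult_carrier_mat[OF Fj mat_diag_dim] Fk assms(4)]
      assoc_mult_mat_vec[OF Fj mat_diag_dim mult_mat_vec_carrier[OF Fk assms(4)]] by simp
  also have "\<dots> = 0\<^sub>v (d+1)"
    unfolding assms(1) by (rule zero_mult_mat_vec[OF assms(4)])
  finally show ?thesis .
qed

lemma F_T_F_0: "2 \<le> j \<Longrightarrow> j \<le> d \<Longrightarrow> F j * T * F 0 = 0\<^sub>m (d+1) (d+1)"
  using F_diag_F_eq_0_swap[of j 0 t] tail_0[of j] by simp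

lemma F_T_F_1: "3 \<le> j \<Longrightarrow> j \<le> d \<Longrightarrow> F j * T * F 1 = 0\<^sub>m (d+1) (d+1)"
  using F_diag_F_eq_0_swap[of j 1 t] tail_1[of j] three_le_d by simp

lemma T_ones_carrier: "T *\<^sub>v ones \<in> carrier_vec (d+1)"
  by (rule carrier_vecI) simp

lemma Y_mult_w: "Y *\<^sub>v w = \<theta> 1 \<cdot>\<^sub>v w"
  unfolding w_def using three_le_d T_ones_carrier by (intro Y_mult_F_mult_vec) auto

lemma t_eq_const_plus_w:
  obtains \<beta> where "\<And>a. a \<le> d \<Longrightarrow> t a = \<beta> + w $ a"
proof -
  let ?v = "T *\<^sub>v ones"
  have outside: "F j *\<^sub>v ?v = 0\<^sub>v (d+1)" if "j \<le> d" "j \<notin> {0,1}" for j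
  proof -
    have "F j *\<^sub>v (T *\<^sub>v (F 0 *\<^sub>v ones)) = 0\<^sub>v (d+1)"
      using that by (intro F_T_F_mult_vec_eq_0 F_T_F_0 ones_carrier) auto
    then show ?thesis using F_mult_ones[of 0] by simp
  qed
  then have t: "t a = (F 0 *\<^sub>v ?v) $ a + w $ a" if a: "a \<le> d" for a
  proof -
    have "t a = ?v $ a" using T_mult_vec_index[OF ones_carrier a] a by simp
    also have "\<dots> = (\<Sum>m\<in>{0,1}. (F m *\<^sub>v ?v) $ a)"
      by (rule eigen_expansion(1)[OF _ T_ones_carrier _ a]) (use three_le_d outside in auto)
    also have "\<dots> = (F 0 *\<^sub>v ?v) $ a + w $ a" by (simp add: w_def)
    finally show ?thesis .
  qed
  have "F 0 *\<^sub>v ?v = (F 0 *\<^sub>v ?v) $ 0 \<cdot>\<^sub>v ones"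
    using Y_mult_F_mult_vec[OF _ T_ones_carrier, of 0] F_carrier[of 0] T_ones_carrier
    by (intro eigenvector_theta_0) auto
  then obtain \<beta> where \<beta>: "F 0 *\<^sub>v ?v = \<beta> \<cdot>\<^sub>v ones" by blast
  have "t a = \<beta> + w $ a" if "a \<le> d" for a
    using t[OF that] arg_cong[OF \<beta>, of "\<lambda>v. v $ a"] that by simp
  then show thesis by (rule that)
qed

lemma w_first_nonzero: "w $ 0 \<noteq> 0"
proof
  assume "w $ 0 = 0"
  then have "w = 0\<^sub>v (d+1)"
    by (rule irreducible_tridiagonal_eigenvector_eq_0[OF irreducible w_carrier Y_mult_w])
  moreover obtain \<beta> where "\<And>a. a \<le> d \<Longrightarrow> t a = \<beta> + w $ a"
    using t_eq_const_plus_w by blast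
  ultimately have "t 0 = t 1" using three_le_d by simp
  with t_distinct[of 0 1] three_le_d show False by simp
qed

lemma Y_mult_T_w_index:
  obtains X Z where "\<And>a. a \<le> d \<Longrightarrow> (Y *\<^sub>v (T *\<^sub>v w)) $ a - \<theta> 2 * (t a * w $ a) = X + Z * w $ a"
proof -
  let ?r = "T *\<^sub>v w"
  have r: "?r \<in> carrier_vec (d+1)" by (rule carrier_vecI) simp
  have outside: "F j *\<^sub>v ?r = 0\<^sub>v (d+1)" if "j \<le> d" "j \<notin> {0,1,2}" for j
    unfolding w_def using that three_le_d T_ones_carrier
    by (intro F_T_F_mult_vec_eq_0 F_T_F_1) auto
  have S: "{0,1,2} \<subseteq> {..d}" using three_le_d by auto
  have "F 0 *\<^sub>v ?r = (F 0 *\<^sub>v ?r) $ 0 \<cdot>\<^sub>v ones"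
    using Y_mult_F_mult_vec[OF _ r, of 0] F_carrier[of 0] r
    by (intro eigenvector_theta_0) auto
  then obtain x where x: "F 0 *\<^sub>v ?r = x \<cdot>\<^sub>v ones" by blast
  have "F 1 *\<^sub>v ?r = ((F 1 *\<^sub>v ?r) $ 0 / w $ 0) \<cdot>\<^sub>v w"
    using Y_mult_F_mult_vec[OF _ r, of 1] F_carrier[of 1] r three_le_d w_first_nonzero
    by (intro irreducible_tridiagonal_eigenvector_unique[OF irreducible _ _ w_carrier Y_mult_w]) auto
  then obtain y where y: "F 1 *\<^sub>v ?r = y \<cdot>\<^sub>v w" by blast
  show thesis
  proof (rule that)
    fix a assume a: "a \<le> d"
    have "(Y *\<^sub>v ?r) $ a - \<theta> 2 * ?r $ a
        = (\<theta> 0 - \<theta> 2) * (F 0 *\<^sub>v ?r) $ a + (\<theta> 1 - \<theta> 2) * (F 1 *\<^sub>v ?r) $ a"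
      using eigen_expansion[OF S r outside a] by (simp add: algebra_simps)
    also have "\<dots> = (\<theta> 0 - \<theta> 2) * x + ((\<theta> 1 - \<theta> 2) * y) * w $ a"
      using x y a w_carrier by simp
    finally show "(Y *\<^sub>v ?r) $ a - \<theta> 2 * (t a * w $ a) = (\<theta> 0 - \<theta> 2) * x + ((\<theta> 1 - \<theta> 2) * y) * w $ a"
      using a T_mult_vec_index[OF w_carrier a] by simp
  qed
qed

theorem tail_identity:
  assumes i: "1 \<le> i" "i \<le> d - 1"
  shows "\<theta> 0 * (t (i+1) - t 1) * (t (i-1) - t 1)
    + \<theta> 1 * (t i - t 0) * (t (d-1) - t (i+1) - t (i-1) + t 1)
    - \<theta> 2 * (t i - t 0) * (t d - t i) = 0"
proof -
  obtain \<beta> where \<beta>: "\<And>a. a \<le> d \<Longrightarrow> t a = \<beta> + w $ a"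
    using t_eq_const_plus_w by blast
  obtain X Z
    where XZ: "\<And>a. a \<le> d \<Longrightarrow> (Y *\<^sub>v (T *\<^sub>v w)) $ a - \<theta> 2 * (t a * w $ a) = X + Z * w $ a"
    using Y_mult_T_w_index by blast
  have Tw: "T *\<^sub>v w \<in> carrier_vec (d+1)" by (rule carrier_vecI) simp
  have w: "w $ a = t a - \<beta>" if "a \<le> d" for a
    using \<beta>[OF that] by simp
  have Tw_index: "(T *\<^sub>v w) $ a = t a * (t a - \<beta>)" if "a \<le> d" for a
    using T_mult_vec_index[OF w_carrier that] w[OF that] by simp
  have Yw: "(Y *\<^sub>v w) $ a = \<theta> 1 * (t a - \<beta>)" if "a \<le> d" for a
    using Y_mult_w w_carrier w[OF that] that by simp
  have Y01: "Y $$ (0,1) = \<theta> 0" and Ydd: "Y $$ (d,d-1) = \<theta> 0"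
    using Y_row_sum[of 0] Y_row_sum[of d] three_le_d by simp_all
  have \<theta>0: "\<theta> 0 \<noteq> 0"
    using irreducible Y01 three_le_d by (auto simp: irreducible_tridiagonal_def)
  have id: "0 < i" "i < d" "i \<le> d" "i - 1 \<le> d" "i + 1 \<le> d" using i three_le_d by auto
  have row_i: "Y $$ (i,i-1) + Y $$ (i,i+1) = \<theta> 0"
    using Y_row_sum[of i] id by simp
  have w_i: "Y $$ (i,i-1) * (t (i-1) - \<beta>) + Y $$ (i,i+1) * (t (i+1) - \<beta>) = \<theta> 1 * (t i - \<beta>)"
    using Y_mult_vec_index[OF w_carrier, of i] Yw[of i] w id by simp
  have w_0: "\<theta> 0 * (t 1 - \<beta>) = \<theta> 1 * (t 0 - \<beta>)"
    using Y_mult_vec_index[OF w_carrier, of 0] Yw[of 0] w[of 1] Y01 three_le_d by simp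
  have w_d: "\<theta> 0 * (t (d-1) - \<beta>) = \<theta> 1 * (t d - \<beta>)"
    using Y_mult_vec_index[OF w_carrier, of d] Yw[of d] w[of "d-1"] Ydd three_le_d by simp
  have r_i: "Y $$ (i,i-1) * (t (i-1) * (t (i-1) - \<beta>)) + Y $$ (i,i+1) * (t (i+1) * (t (i+1) - \<beta>))
      - \<theta> 2 * (t i * (t i - \<beta>)) = X + Z * (t i - \<beta>)"
    using Y_mult_vec_index[OF Tw, of i] XZ[of i] Tw_index w id by simp
  have r_0: "\<theta> 0 * (t 1 * (t 1 - \<beta>)) - \<theta> 2 * (t 0 * (t 0 - \<beta>)) = X + Z * (t 0 - \<beta>)"
    using Y_mult_vec_index[OF Tw, of 0] XZ[of 0] Tw_index[of 1] w[of 0] Y01 three_le_d by simp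
  have r_d: "\<theta> 0 * (t (d-1) * (t (d-1) - \<beta>)) - \<theta> 2 * (t d * (t d - \<beta>)) = X + Z * (t d - \<beta>)"
    using Y_mult_vec_index[OF Tw, of d] XZ[of d] Tw_index[of "d-1"] w[of d] Ydd three_le_d by simp
  have "t d \<noteq> t 0" using t_distinct[of d 0] three_le_d by simp
  from tail_identity_algebra[OF row_i w_i w_0 w_d r_i r_0 r_d \<theta>0 this] show ?thesis .
qed

end

section \<open>Passing to the normalizing basis\<close>

lemma mult_mat_of_cols:
  fixes X Z :: "'a::comm_ring_1 mat" and v :: "nat \<Rightarrow> 'a vec"
  assumes X: "X \<in> carrier_mat n n" and Z: "Z \<in> carrier_mat n n"
    and v: "\<And>j. j < n \<Longrightarrow> v j \<in> carrier_vec n"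
    and Xv: "\<And>j k. j < n \<Longrightarrow> k < n \<Longrightarrow> (X *\<^sub>v v j) $ k = (\<Sum>i<n. Z $$ (i,j) * v i $ k)"
  shows "X * mat_of_cols n (map v [0..<n]) = mat_of_cols n (map v [0..<n]) * Z"
proof (rule eq_matI)
  let ?P = "mat_of_cols n (map v [0..<n])"
  fix k j assume "k < dim_row (?P * Z)" "j < dim_col (?P * Z)"
  then have kj: "k < n" "j < n" using Z by auto
  have "(X * ?P) $$ (k,j) = (X *\<^sub>v v j) $ k"
    using X v kj by simp
  also have "\<dots> = (\<Sum>i<n. ?P $$ (k,i) * Z $$ (i,j))"
    using Xv kj by (simp add: mat_of_cols_index mult.commute)
  also have "\<dots> = (?P * Z) $$ (k,j)"
    using Z kj by (intro index_mult_mat_sum[symmetric]) auto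
  finally show "(X * ?P) $$ (k,j) = (?P * Z) $$ (k,j)" .
qed (use X Z in auto)

lemma mult_mat_of_cols_diag:
  fixes X :: "'a::comm_ring_1 mat" and v :: "nat \<Rightarrow> 'a vec"
  assumes X: "X \<in> carrier_mat n n" and v: "\<And>j. j < n \<Longrightarrow> v j \<in> carrier_vec n"
    and Xv: "\<And>j. j < n \<Longrightarrow> X *\<^sub>v v j = c j \<cdot>\<^sub>v v j"
  shows "X * mat_of_cols n (map v [0..<n]) = mat_of_cols n (map v [0..<n]) * mat_diag n c"
proof (rule mult_mat_of_cols[OF X mat_diag_dim v])
  fix j k assume jk: "j < n" "k < n"
  have "(\<Sum>i<n. mat_diag n c $$ (i,j) * v i $ k) = (\<Sum>i<n. if i = j then c j * v j $ k else 0)"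
    using jk by (intro sum.cong) auto
  with Xv jk carrier_vecD[OF v[OF jk(1)]]
  show "(X *\<^sub>v v j) $ k = (\<Sum>i<n. mat_diag n c $$ (i,j) * v i $ k)"
    by simp
qed

lemma normalizing_coordinates:
  fixes Es :: "nat \<Rightarrow> 'a::field mat"
  assumes Es: "orth_idem_system d Es" and A: "A \<in> carrier_mat (d+1) (d+1)"
    and norm: "normalizing d Es A \<theta>"
  obtains P Q Y where "P \<in> carrier_mat (d+1) (d+1)" "Q \<in> carrier_mat (d+1) (d+1)"
    "P * Q = 1\<^sub>m (d+1)" "Q * P = 1\<^sub>m (d+1)" "Y \<in> carrier_mat (d+1) (d+1)" "Q * A * P = Y"
    "\<And>i. i \<le> d \<Longrightarrow> (\<Sum>j\<le>d. Y $$ (i,j)) = \<theta>"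
    "\<And>i. i \<le> d \<Longrightarrow> Q * Es i * P = mat_diag (d+1) (\<lambda>k. of_bool (k = i))"
    "\<And>c. Q * mat (d+1) (d+1) (\<lambda>(k,l). \<Sum>i\<le>d. c i * Es i $$ (k,l)) * P = mat_diag (d+1) c"
proof -
  let ?n = "d+1"
  from norm obtain v Y where
    v: "\<forall>i\<le>d. v i \<in> carrier_vec ?n \<and> (\<exists>w \<in> carrier_vec ?n. v i = Es i *\<^sub>v w)" and
    det: "det (mat_of_cols ?n (map v [0..<?n])) \<noteq> 0" and Y: "Y \<in> carrier_mat ?n ?n" and
    Ycol: "\<forall>j\<le>d. \<forall>k<?n. (A *\<^sub>v v j) $ k = (\<Sum>i\<le>d. Y $$ (i,j) * v i $ k)" and
    Yrow: "\<forall>i\<le>d. (\<Sum>j\<le>d. Y $$ (i,j)) = \<theta>"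
    unfolding normalizing_def by blast
  define P where "P = mat_of_cols ?n (map v [0..<?n])"
  have P: "P \<in> carrier_mat ?n ?n"
    unfolding P_def using mat_of_cols_carrier(1)[of ?n "map v [0..<?n]"] by simp
  obtain Q where Q: "Q \<in> carrier_mat ?n ?n" and QP: "Q * P = 1\<^sub>m ?n" and PQ: "P * Q = 1\<^sub>m ?n"
    using det_non_zero_imp_unit[OF P det[folded P_def], of "()"]
    unfolding Units_def ring_mat_def by auto
  have Esc: "\<And>i. i \<le> d \<Longrightarrow> Es i \<in> carrier_mat ?n ?n"
    and EsEs: "\<And>i j. i \<le> d \<Longrightarrow> j \<le> d \<Longrightarrow> Es i * Es j = (if i = j then Es i else 0\<^sub>m ?n ?n)"
    using Es unfolding orth_idem_system_def by auto
  have vc: "\<And>j. j < ?n \<Longrightarrow> v j \<in> carrier_vec ?n" using v by auto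
  have Esv: "Es i *\<^sub>v v j = of_bool (j = i) \<cdot>\<^sub>v v j" if ij: "i \<le> d" "j \<le> d" for i j
  proof -
    obtain w where w: "w \<in> carrier_vec ?n" and vj: "v j = Es j *\<^sub>v w" using v ij by auto
    have "Es i *\<^sub>v v j = (Es i * Es j) *\<^sub>v w"
      unfolding vj using assoc_mult_mat_vec[OF Esc[OF ij(1)] Esc[OF ij(2)] w] by simp
    then show ?thesis
      using EsEs[OF ij] vj w carrier_matD[OF Esc[OF ij(2)]]
      by (auto simp: zero_mult_mat_vec intro!: eq_vecI)
  qed
  have combination_v: "mat ?n ?n (\<lambda>(k,l). \<Sum>i\<le>d. c i * Es i $$ (k,l)) *\<^sub>v v j = c j \<cdot>\<^sub>v v j"
    if j: "j \<le> d" for c j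
  proof (rule eq_vecI)
    fix k assume "k < dim_vec (c j \<cdot>\<^sub>v v j)"
    then have k: "k < ?n" using carrier_vecD[OF vc[of j]] j by simp
    have "(mat ?n ?n (\<lambda>(k,l). \<Sum>i\<le>d. c i * Es i $$ (k,l)) *\<^sub>v v j) $ k
        = (\<Sum>l<?n. mat ?n ?n (\<lambda>(k,l). \<Sum>i\<le>d. c i * Es i $$ (k,l)) $$ (k,l) * v j $ l)"
      using j k by (intro index_mult_mat_vec_sum[OF mat_carrier vc]) auto
    also have "\<dots> = (\<Sum>l<?n. \<Sum>i\<le>d. c i * (Es i $$ (k,l) * v j $ l))"
      using k by (intro sum.cong refl) (simp add: sum_distrib_right mult.assoc)
    also have "\<dots> = (\<Sum>i\<le>d. c i * (\<Sum>l<?n. Es i $$ (k,l) * v j $ l))"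
      by (simp only: sum_distrib_left) (rule sum.swap)
    also have "\<dots> = (\<Sum>i\<le>d. c i * (Es i *\<^sub>v v j) $ k)"
      using j k Esc by (intro sum.cong refl arg_cong[where f = "(*) _"] index_mult_mat_vec_sum[symmetric] vc)
        auto
    also have "\<dots> = (\<Sum>i\<le>d. if i = j then c j * v j $ k else 0)"
    proof (intro sum.cong refl)
      fix i assume "i \<in> {..d}"
      then show "c i * (Es i *\<^sub>v v j) $ k = (if i = j then c j * v j $ k else 0)"
        using Esv[of i j] j k carrier_vecD[OF vc[of j]] by auto
    qed
    also have "\<dots> = c j * v j $ k" using j by simp
    finally show "(mat ?n ?n (\<lambda>(k,l). \<Sum>i\<le>d. c i * Es i $$ (k,l)) *\<^sub>v v j) $ k = (c j \<cdot>\<^sub>v v j) $ k"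
      using k carrier_vecD[OF vc[of j]] j by simp
  qed (use carrier_vecD[OF vc[of j]] j in simp)
  show thesis
  proof (rule that[OF P Q PQ QP Y])
    show "Q * A * P = Y"
    proof (rule conjugate_eq_of_mult_eq[OF P Q QP A Y])
      show "A * P = P * Y" unfolding P_def
      proof (rule mult_mat_of_cols[OF A Y vc])
        fix j k assume "j < ?n" "k < ?n"
        with Ycol show "(A *\<^sub>v v j) $ k = (\<Sum>i<?n. Y $$ (i,j) * v i $ k)"
          by (simp only: lessThan_Suc_atMost Suc_eq_plus1[symmetric] less_Suc_eq_le)
      qed
    qed
    show "\<And>i. i \<le> d \<Longrightarrow> (\<Sum>j\<le>d. Y $$ (i,j)) = \<theta>" using Yrow by blast
    show "Q * Es i * P = mat_diag ?n (\<lambda>k. of_bool (k = i))" if i: "i \<le> d" for i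
      by (rule conjugate_eq_of_mult_eq[OF P Q QP Esc[OF i] mat_diag_dim])
        (unfold P_def, rule mult_mat_of_cols_diag[OF Esc[OF i] vc], use Esv i in auto)
    show "Q * mat ?n ?n (\<lambda>(k,l). \<Sum>i\<le>d. c i * Es i $$ (k,l)) * P = mat_diag ?n c" for c
      by (rule conjugate_eq_of_mult_eq[OF P Q QP mat_carrier mat_diag_dim])
        (unfold P_def, rule mult_mat_of_cols_diag[OF mat_carrier vc], use combination_v in auto)
  qed
qed

lemma conjugate_mult3:
  fixes P Q X Z W :: "'a::comm_ring_1 mat"
  assumes "P \<in> carrier_mat n n" "Q \<in> carrier_mat n n" "P * Q = 1\<^sub>m n"
    and "X \<in> carrier_mat n n" "Z \<in> carrier_mat n n" "W \<in> carrier_mat n n"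
  shows "(Q * X * P) * (Q * Z * P) * (Q * W * P) = Q * (X * Z * W) * P"
  unfolding conjugate_mult[OF assms(1-5)]
  by (rule conjugate_mult[OF assms(1-3) mult_carrier_mat[OF assms(4,5)] assms(6)])

lemma diag_unit_mult_diag_unit_eq_0_iff:
  fixes Y :: "'a::comm_ring_1 mat"
  assumes Y: "Y \<in> carrier_mat n n" and ij: "i < n" "j < n"
  shows "mat_diag n (\<lambda>k. of_bool (k = i)) * Y * mat_diag n (\<lambda>k. of_bool (k = j)) = 0\<^sub>m n n
     \<longleftrightarrow> Y $$ (i,j) = 0"
proof -
  have M: "mat_diag n (\<lambda>k. of_bool (k = i)) * Y * mat_diag n (\<lambda>k. of_bool (k = j))
      = mat n n (\<lambda>(a,b). if a = i \<and> b = j then Y $$ (i,j) else 0)"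
    unfolding mat_diag_mult_left[OF Y] mat_diag_mult_right[OF mat_carrier]
    by (rule eq_matI) auto
  show ?thesis
  proof
    assume "mat_diag n (\<lambda>k. of_bool (k = i)) * Y * mat_diag n (\<lambda>k. of_bool (k = j)) = 0\<^sub>m n n"
    from arg_cong[OF this[unfolded M], of "\<lambda>M. M $$ (i,j)"] ij show "Y $$ (i,j) = 0" by simp
  qed (unfold M, rule eq_matI, auto)
qed

lemma mat_trace_diag_unit_mult:
  fixes Y :: "'a::comm_ring_1 mat"
  assumes Y: "Y \<in> carrier_mat n n" and i: "i < n"
  shows "mat_trace (mat_diag n (\<lambda>k. of_bool (k = i)) * Y) = Y $$ (i,i)"
proof -
  have "mat_trace (mat_diag n (\<lambda>k. of_bool (k = i)) * Y) = (\<Sum>a<n. if a = i then Y $$ (i,i) else 0)"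
    unfolding mat_trace_def mat_diag_mult_left[OF Y] by (intro sum.cong) auto
  then show ?thesis using i by simp
qed

lemma normalized_matrix_tridiagonal:
  fixes A Y P Q :: "'a::field mat" and Es :: "nat \<Rightarrow> 'a mat"
  assumes P: "P \<in> carrier_mat (d+1) (d+1)" and Q: "Q \<in> carrier_mat (d+1) (d+1)"
    and PQ: "P * Q = 1\<^sub>m (d+1)" and A: "A \<in> carrier_mat (d+1) (d+1)"
    and Es_sys: "orth_idem_system d Es" and Y: "Q * A * P = Y"
    and D: "\<And>i. i \<le> d \<Longrightarrow> Q * Es i * P = mat_diag (d+1) (\<lambda>k. of_bool (k = i))"
    and tridiag0: "\<forall>i\<le>d. \<forall>j\<le>d. (i > j + 1 \<or> j > i + 1) \<longrightarrow> Es i * A * Es j = 0\<^sub>m (d+1) (d+1)"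
    and tridiag1: "\<forall>i\<le>d. \<forall>j\<le>d. (i = j + 1 \<or> j = i + 1) \<longrightarrow> Es i * A * Es j \<noteq> 0\<^sub>m (d+1) (d+1)"
    and bip: "\<forall>i\<le>d. mat_trace (Es i * A) = 0"
  shows "irreducible_tridiagonal d Y" and "\<And>i. i \<le> d \<Longrightarrow> Y $$ (i,i) = 0"
proof -
  let ?n = "d+1"
  have Es: "\<And>i. i \<le> d \<Longrightarrow> Es i \<in> carrier_mat ?n ?n"
    using Es_sys unfolding orth_idem_system_def by auto
  have Yc: "Y \<in> carrier_mat ?n ?n" using Y P Q A by auto
  have block: "Es i * A * Es j = 0\<^sub>m ?n ?n \<longleftrightarrow> Y $$ (i,j) = 0" if ij: "i \<le> d" "j \<le> d" for i j
  proof -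
    have "Q * (Es i * A * Es j) * P
        = mat_diag ?n (\<lambda>k. of_bool (k = i)) * Y * mat_diag ?n (\<lambda>k. of_bool (k = j))"
      using conjugate_mult3[OF P Q PQ Es[OF ij(1)] A Es[OF ij(2)]] D ij Y by simp
    with conjugate_eq_0_iff[OF P Q PQ mult_carrier_mat[OF mult_carrier_mat[OF Es[OF ij(1)] A] Es[OF ij(2)]]]
      diag_unit_mult_diag_unit_eq_0_iff[OF Yc, of i j] ij
    show ?thesis by simp
  qed
  have far: "Y $$ (i,j) = 0" if "i \<le> d" "j \<le> d" "i > j + 1 \<or> j > i + 1" for i j
    using tridiag0 block that by blast
  have near: "Y $$ (i,i+1) \<noteq> 0 \<and> Y $$ (i+1,i) \<noteq> 0" if "i < d" for i
    using tridiag1[rule_format, of i "i+1"] tridiag1[rule_format, of "i+1" i]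
      block[of i "i+1"] block[of "i+1" i] that by simp
  show "irreducible_tridiagonal d Y"
    unfolding irreducible_tridiagonal_def tridiagonal_def using Yc far near by blast
  show "Y $$ (i,i) = 0" if i: "i \<le> d" for i
  proof -
    have "mat_trace (Es i * A) = mat_trace (P * (Q * Es i * A))"
      using P Q PQ Es[OF i] A by (simp add: assoc_mult_mat[of _ ?n ?n _ ?n _ ?n] mult_inverse_cancel)
    also have "\<dots> = mat_trace (Q * Es i * A * P)"
      using P Q Es[OF i] A by (intro mat_trace_mult_comm) auto
    also have "Q * Es i * A * P = (Q * Es i * P) * (Q * A * P)"
      using conjugate_mult[OF P Q PQ Es[OF i] A] P Q Es[OF i] A
      by (simp add: assoc_mult_mat[of _ ?n ?n _ ?n _ ?n])
    also have "mat_trace \<dots> = Y $$ (i,i)"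
      using D[OF i] Y mat_trace_diag_unit_mult[OF Yc] i by simp
    finally show ?thesis using bip i by simp
  qed
qed

lemma is_tail_products_eq_0:
  fixes E :: "nat \<Rightarrow> 'a::field mat"
  assumes d: "2 \<le> d"
    and E: "\<And>i j. i \<le> d \<Longrightarrow> j \<le> d \<Longrightarrow> E i * E j = (if i = j then E i else 0\<^sub>m n n)"
    and Ec: "\<And>i. i \<le> d \<Longrightarrow> E i \<in> carrier_mat n n" and As: "As \<in> carrier_mat n n"
    and tail: "is_tail d E As" and E2: "delta_adj E As 1 2"
  shows "\<And>j. 2 \<le> j \<Longrightarrow> j \<le> d \<Longrightarrow> E 0 * As * E j = 0\<^sub>m n n"
    and "\<And>j. 3 \<le> j \<Longrightarrow> j \<le> d \<Longrightarrow> E 1 * As * E j = 0\<^sub>m n n"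
proof -
  have adj: "delta_adj E As i j \<longleftrightarrow> E i \<noteq> E j \<and> E i * As * E j \<noteq> 0\<^sub>m n n" for i j
    using As unfolding delta_adj_def by auto
  have tail0: "\<And>j. j \<le> d \<Longrightarrow> E j \<noteq> E 1 \<Longrightarrow> \<not> delta_adj E As 0 j"
    and tail1: "\<And>j k. j \<le> d \<Longrightarrow> k \<le> d \<Longrightarrow> E j \<noteq> E 0 \<Longrightarrow> E k \<noteq> E 0
      \<Longrightarrow> delta_adj E As 1 j \<Longrightarrow> delta_adj E As 1 k \<Longrightarrow> E j = E k"
    using tail unfolding is_tail_def by blast+
  have vanish: "E i * As * E j = 0\<^sub>m n n" if "i \<le> d" "j \<le> d" "k \<le> d" "j \<noteq> k" "E j = E k" for i j k
  proof -
    have "E j = E j * E j" using E[of j j] that by simp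
    also have "\<dots> = 0\<^sub>m n n" using E[of j k] that by simp
    finally show ?thesis using Ec[OF that(1)] As by simp
  qed
  show "E 0 * As * E j = 0\<^sub>m n n" if j: "2 \<le> j" "j \<le> d" for j
  proof (cases "E j = E 1")
    case True
    with j vanish[of 0 j 1] show ?thesis by simp
  next
    case False
    with tail0[OF j(2)] show ?thesis unfolding adj by (cases "E 0 = E j") (use j vanish[of 0 j 0] in auto)
  qed
  have E20: "E 2 \<noteq> E 0"
  proof
    assume "E 2 = E 0"
    with vanish[of 1 2 0] d have "E 1 * As * E 2 = 0\<^sub>m n n" by simp
    with E2 show False unfolding adj by simp
  qed
  show "E 1 * As * E j = 0\<^sub>m n n" if j: "3 \<le> j" "j \<le> d" for j
  proof (rule ccontr)
    assume ne: "E 1 * As * E j \<noteq> 0\<^sub>m n n"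
    have "E j \<noteq> E 0" "E j \<noteq> E 1" "E j \<noteq> E 2"
      using ne vanish[of 1 j 0] vanish[of 1 j 1] vanish[of 1 j 2] j d by auto
    with ne have "delta_adj E As 1 j" unfolding adj by auto
    with tail1[of j 2] j d E20 E2 \<open>E j \<noteq> E 0\<close> have "E j = E 2" by simp
    with \<open>E j \<noteq> E 2\<close> show False ..
  qed
qed

lemma primitive_idempotents_conjugate:
  fixes A P Q Y :: "'a::field mat"
  assumes prim: "primitive_idempotents d A th E"
    and P: "P \<in> carrier_mat (d+1) (d+1)" and Q: "Q \<in> carrier_mat (d+1) (d+1)"
    and PQ: "P * Q = 1\<^sub>m (d+1)" and QP: "Q * P = 1\<^sub>m (d+1)" and Y: "Q * A * P = Y"
  shows "resolution_of_identity (d+1) d (\<lambda>i. Q * E i * P)"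
    and "\<And>m. m \<le> d \<Longrightarrow> Y * (Q * E m * P) = th m \<cdot>\<^sub>m (Q * E m * P)"
proof -
  have A: "A \<in> carrier_mat (d+1) (d+1)"
    and Ec: "\<And>i. i \<le> d \<Longrightarrow> E i \<in> carrier_mat (d+1) (d+1)"
    and AE: "\<And>i. i \<le> d \<Longrightarrow> A * E i = th i \<cdot>\<^sub>m E i"
    and E: "resolution_of_identity (d+1) d E"
    using prim unfolding primitive_idempotents_def resolution_of_identity_def by auto
  show "resolution_of_identity (d+1) d (\<lambda>i. Q * E i * P)"
    by (rule resolution_of_identity_conjugate[OF E P Q QP])
  show "Y * (Q * E m * P) = th m \<cdot>\<^sub>m (Q * E m * P)" if m: "m \<le> d" for m
  proof -
    have "Y * (Q * E m * P) = Q * (A * E m) * P"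
      unfolding Y[symmetric] by (rule conjugate_mult[OF P Q PQ A Ec[OF m]])
    also have "\<dots> = th m \<cdot>\<^sub>m (Q * E m * P)"
      unfolding AE[OF m] mult_smult_distrib[OF Q Ec[OF m]]
      by (rule mult_smult_assoc_mat[OF mult_carrier_mat[OF Q Ec[OF m]] P])
    finally show ?thesis .
  qed
qed

lemma conjugate_tail_products_eq_0:
  fixes A As P Q T :: "'a::field mat"
  assumes d: "2 \<le> d" and prim: "primitive_idempotents d A th E"
    and P: "P \<in> carrier_mat (d+1) (d+1)" and Q: "Q \<in> carrier_mat (d+1) (d+1)"
    and PQ: "P * Q = 1\<^sub>m (d+1)" and As: "As \<in> carrier_mat (d+1) (d+1)" and T: "Q * As * P = T"
    and tail: "is_tail d E As" and E2: "delta_adj E As 1 2"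
  shows "\<And>j. 2 \<le> j \<Longrightarrow> j \<le> d \<Longrightarrow> (Q * E 0 * P) * T * (Q * E j * P) = 0\<^sub>m (d+1) (d+1)"
    and "\<And>j. 3 \<le> j \<Longrightarrow> j \<le> d \<Longrightarrow> (Q * E 1 * P) * T * (Q * E j * P) = 0\<^sub>m (d+1) (d+1)"
proof -
  have Ec: "\<And>i. i \<le> d \<Longrightarrow> E i \<in> carrier_mat (d+1) (d+1)"
    and EE: "\<And>i j. i \<le> d \<Longrightarrow> j \<le> d \<Longrightarrow> E i * E j = (if i = j then E i else 0\<^sub>m (d+1) (d+1))"
    using prim unfolding primitive_idempotents_def by auto
  have conj: "(Q * E a * P) * T * (Q * E j * P) = Q * (E a * As * E j) * P" if "a \<le> d" "j \<le> d" for a j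
    unfolding T[symmetric] using conjugate_mult3[OF P Q PQ Ec As Ec] that by simp
  show "(Q * E 0 * P) * T * (Q * E j * P) = 0\<^sub>m (d+1) (d+1)" if "2 \<le> j" "j \<le> d" for j
    using is_tail_products_eq_0(1)[OF d EE Ec As tail E2 that] conj[of 0 j] that P Q by simp
  show "(Q * E 1 * P) * T * (Q * E j * P) = 0\<^sub>m (d+1) (d+1)" if "3 \<le> j" "j \<le> d" for j
    using is_tail_products_eq_0(2)[OF d EE Ec As tail E2 that] conj[of 1 j] that d P Q by simp
qed

theorem proposition8p4:
  fixes d :: nat and A :: "'a::field mat" and Es E :: "nat \<Rightarrow> 'a mat"
    and th ths :: "nat \<Rightarrow> 'a" and As :: "'a mat"
  assumes d3: "d \<ge> 3"
    and A_carrier: "A \<in> carrier_mat (d+1) (d+1)"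
    and Es_sys: "orth_idem_system d Es"
    and tridiag0: "\<forall>i\<le>d. \<forall>j\<le>d. (i > j + 1 \<or> j > i + 1) \<longrightarrow> Es i * A * Es j = 0\<^sub>m (d+1) (d+1)"
    and tridiag1: "\<forall>i\<le>d. \<forall>j\<le>d. (i = j + 1 \<or> j = i + 1) \<longrightarrow> Es i * A * Es j \<noteq> 0\<^sub>m (d+1) (d+1)"
    and prim: "primitive_idempotents d A th E"
    and bip: "\<forall>i\<le>d. mat_trace (Es i * A) = 0"
    and ths_dist: "\<forall>i\<le>d. \<forall>j\<le>d. i \<noteq> j \<longrightarrow> ths i \<noteq> ths j"
    and As_def: "As = mat (d+1) (d+1) (\<lambda>(k,l). \<Sum>i\<le>d. ths i * Es i $$ (k,l))"
    and norm: "normalizing d Es A (th 0)"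
    and tail: "is_tail d E As"
    and E2: "delta_adj E As 1 2"
  shows "\<forall>i. 1 \<le> i \<and> i \<le> d - 1 \<longrightarrow>
    th 0 * (ths (i+1) - ths 1) * (ths (i-1) - ths 1)
    + th 1 * (ths i - ths 0) * (ths (d-1) - ths (i+1) - ths (i-1) + ths 1)
    - th 2 * (ths i - ths 0) * (ths d - ths i) = 0"
proof -
  obtain P Q Y where P: "P \<in> carrier_mat (d+1) (d+1)" and Q: "Q \<in> carrier_mat (d+1) (d+1)"
    and PQ: "P * Q = 1\<^sub>m (d+1)" and QP: "Q * P = 1\<^sub>m (d+1)" and "Y \<in> carrier_mat (d+1) (d+1)"
    and Y: "Q * A * P = Y" and rows: "\<And>i. i \<le> d \<Longrightarrow> (\<Sum>j\<le>d. Y $$ (i,j)) = th 0"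
    and Es_coord: "\<And>i. i \<le> d \<Longrightarrow> Q * Es i * P = mat_diag (d+1) (\<lambda>k. of_bool (k = i))"
    and comb: "\<And>c. Q * mat (d+1) (d+1) (\<lambda>(k,l). \<Sum>i\<le>d. c i * Es i $$ (k,l)) * P = mat_diag (d+1) c"
    by (rule normalizing_coordinates[OF Es_sys A_carrier norm]) blast
  have T: "Q * As * P = mat_diag (d+1) ths" unfolding As_def by (rule comb)
  have As: "As \<in> carrier_mat (d+1) (d+1)" unfolding As_def by simp
  have th_dist: "\<And>i j. i \<le> d \<Longrightarrow> j \<le> d \<Longrightarrow> i \<noteq> j \<Longrightarrow> th i \<noteq> th j"
    using prim unfolding primitive_idempotents_def by blast
  note Y_tri = normalized_matrix_tridiagonal[OF P Q PQ A_carrier Es_sys Y Es_coord tridiag0 tridiag1 bip]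
  note F = primitive_idempotents_conjugate[OF prim P Q PQ QP Y]
  note tail_F = conjugate_tail_products_eq_0[OF _ prim P Q PQ As T tail E2]
  interpret normalized_tail d Y th "\<lambda>i. Q * E i * P" ths
    by unfold_locales (use Y_tri F tail_F th_dist rows d3 ths_dist in auto)
  show ?thesis using tail_identity by blast
qed

end
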